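(* Let $P$ be a probability distribution on $\mathcal{X}\times\{+1,-1\}$ such that for some $\varepsilon>0$, $P(\{x\in\mathcal{X}:\varepsilon\le P(+1|x)\le 1-\varepsilon\})>0$. Let $\ell:\mathbb{R}\to\mathbb{R}$ be non-decreasing, convex and non-negative, and suppose that for every $M>0$ there is $z_0$ such that $g\ge M$ for all $z\ge z_0$ and all $g\in\partial\ell(z)$. Define, for measurable $f:\mathcal{X}\to\mathbb{R}$ and $\rho\in\mathbb{R}$, $\mathcal{R}(f,\rho)=-2\rho+\mathbb{E}_P[\ell(\rho-yf(x))]$ and $\mathcal{R}^*=\inf\{\mathcal{R}(f,\rho): f\in L_0(\mathcal{X}),\rho\in\mathbb{R}\}$. Then $\mathcal{R}^*>-\infty$.
   Context: $P(y|x)$ denotes the conditional probability of label $y$ given input $x$; $L_0(\mathcal{X})$ is the set of measurable functions on $\mathcal{X}$; $\partial\ell(z)$ is the subdifferential of $\ell$ at $z$. *)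

theory Defs
  imports "HOL-Probability.Probability"
begin

definition subdiff :: "(real \<Rightarrow> real) \<Rightarrow> real \<Rightarrow> real set" where
  "subdiff l z = {g. \<forall>w. l w \<ge> l z + g * (w - z)}"

definition label :: "bool \<Rightarrow> real" where
  "label b = (if b then 1 else -1)"

text \<open>Risk R(f,rho) = -2 rho + E_P[l(rho - y f(x))], valued in the extended reals
  (the expectation of the non-negative loss may be +infinity).\<close>
definition risk :: "('a \<times> bool) measure \<Rightarrow> (real \<Rightarrow> real) \<Rightarrow> ('a \<Rightarrow> real) \<Rightarrow> real \<Rightarrow> ereal" where
  "risk P l f \<rho> = ereal (-2 * \<rho>) +
     enn2ereal (\<integral>\<^sup>+ p. ennreal (l (\<rho> - label (snd p) * f (fst p))) \<partial>P)"

end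

theory Submission
  imports Defs
begin

text \<open>On the region S where eps \<le> eta \<le> 1 - eps both labels have conditional probability at
  least eps, so every classifier f gets a set of P-mass at least c = eps * P_X(S) > 0 wrong, in
  the sense y f(x) \<le> 0. There the loss is at least l(rho) by monotonicity, hence
  R(f, rho) \<ge> -2 rho + c l(rho). Unbounded subgradients make l grow faster than every line,
  l(rho) \<ge> (2 / c) rho - K, so R(f, rho) \<ge> -c K uniformly in f and rho.\<close>

lemma convex_on_slope_mono:
  fixes l :: "real \<Rightarrow> real"
  assumes "convex_on UNIV l" "x < t" "t < y"
  shows "(l t - l x) / (t - x) \<le> (l y - l t) / (y - t)"
  using convex_on_slope_le[OF assms(1) _ _ assms(2,3)]
  by (smt (verit, del_insts) minus_diff_eq minus_divide_divide UNIV_I)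

lemma subdiff_nonempty:
  fixes l :: "real \<Rightarrow> real"
  assumes convex: "convex_on UNIV l"
  shows "subdiff l z \<noteq> {}"
proof -
  txt \<open>The supremum of the left difference quotients at z is a subgradient.\<close>
  define left_slopes where "left_slopes = {(l z - l w) / (z - w) | w. w < z}"
  have left_le_right: "s \<le> (l v - l z) / (v - z)" if "s \<in> left_slopes" "z < v" for s v
    using that convex_on_slope_mono[OF convex] unfolding left_slopes_def by blast
  have ne: "left_slopes \<noteq> {}"
    unfolding left_slopes_def by (auto intro: exI[of _ "z - 1"])
  have bdd: "bdd_above left_slopes"
    using left_le_right[of _ "z + 1"] by (intro bdd_aboveI[of _ "l (z + 1) - l z"]) auto
  define g where "g = Sup left_slopes"
  have "l z + g * (w - z) \<le> l w" for w
  proof (cases w z rule: linorder_cases)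
    case less
    have "(l z - l w) / (z - w) \<le> g"
      unfolding g_def using less by (intro cSup_upper[OF _ bdd]) (auto simp: left_slopes_def)
    with less show ?thesis by (simp add: divide_le_eq algebra_simps)
  next
    case greater
    have "g \<le> (l w - l z) / (w - z)"
      unfolding g_def using left_le_right greater by (intro cSup_least[OF ne]) auto
    with greater show ?thesis by (simp add: le_divide_eq algebra_simps)
  qed simp
  then show ?thesis unfolding subdiff_def by blast
qed

lemma ex_affine_minorant:
  fixes l :: "real \<Rightarrow> real"
  assumes convex: "convex_on UNIV l" and nonneg: "\<forall>z. l z \<ge> 0"
    and subdiff_unbounded: "\<forall>B>0. \<exists>z0. \<forall>z\<ge>z0. \<forall>g\<in>subdiff l z. g \<ge> B"
    and "a > 0"
  shows "\<exists>K. \<forall>\<rho>. a * \<rho> - K \<le> l \<rho>"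
proof -
  obtain z0 where z0: "\<forall>z\<ge>z0. \<forall>g\<in>subdiff l z. g \<ge> a"
    using subdiff_unbounded \<open>a > 0\<close> by blast
  define z1 where "z1 = max z0 0"
  obtain g where g: "g \<in> subdiff l z1"
    using subdiff_nonempty[OF convex] by blast
  have "a \<le> g"
    using z0 g max.cobounded1 unfolding z1_def by blast
  have "a * \<rho> - a * z1 \<le> l \<rho>" for \<rho>
  proof (cases "z1 \<le> \<rho>")
    case True
    have "a * (\<rho> - z1) \<le> g * (\<rho> - z1)"
      using \<open>a \<le> g\<close> True by (intro mult_right_mono) auto
    moreover have "l z1 + g * (\<rho> - z1) \<le> l \<rho>"
      using g by (simp add: subdiff_def)
    ultimately show ?thesis
      using nonneg[rule_format, of z1] by (simp add: right_diff_distrib)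
  next
    case False
    then have "a * \<rho> \<le> a * z1"
      using \<open>a > 0\<close> by simp
    then show ?thesis
      using nonneg[rule_format, of \<rho>] by simp
  qed
  then show ?thesis by blast
qed

lemma risk_ge_on_misclassified:
  fixes P :: "('a \<times> bool) measure" and l :: "real \<Rightarrow> real" and f :: "'a \<Rightarrow> real"
  assumes "finite_measure P" and "mono l" and nonneg: "\<forall>z. l z \<ge> 0"
    and W: "W \<in> sets P" "\<And>x y. (x, y) \<in> W \<Longrightarrow> label y * f x \<le> 0"
  shows "ereal (-2 * \<rho> + l \<rho> * measure P W) \<le> risk P l f \<rho>"
proof -
  have pointwise:
    "ennreal (l \<rho>) * indicator W p \<le> ennreal (l (\<rho> - label (snd p) * f (fst p)))" for p
  proof (cases "p \<in> W")
    case True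
    then have "\<rho> \<le> \<rho> - label (snd p) * f (fst p)"
      using W(2)[of "fst p" "snd p"] by simp
    then show ?thesis
      using True \<open>mono l\<close> by (simp add: monoD ennreal_leI)
  qed simp
  have "ennreal (l \<rho> * measure P W) = (\<integral>\<^sup>+ p. ennreal (l \<rho>) * indicator W p \<partial>P)"
    using nonneg W(1)
    by (simp add: finite_measure.emeasure_eq_measure[OF \<open>finite_measure P\<close>] ennreal_mult
        nn_integral_cmult_indicator)
  also have "\<dots> \<le> (\<integral>\<^sup>+ p. ennreal (l (\<rho> - label (snd p) * f (fst p))) \<partial>P)"
    by (intro nn_integral_mono pointwise)
  finally have "ereal (l \<rho> * measure P W)
      \<le> enn2ereal (\<integral>\<^sup>+ p. ennreal (l (\<rho> - label (snd p) * f (fst p))) \<partial>P)"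
    using nonneg by (simp add: less_eq_ennreal.rep_eq)
  then have "ereal (-2 * \<rho>) + ereal (l \<rho> * measure P W) \<le> risk P l f \<rho>"
    unfolding risk_def by (rule add_left_mono)
  then show ?thesis by simp
qed

lemma sets_Collect_in_set:
  assumes "S \<in> sets M" and "Measurable.pred M P"
  shows "{x \<in> S. P x} \<in> sets M"
proof -
  have "{x \<in> S. P x} = S \<inter> {x \<in> space M. P x}"
    using sets.sets_into_space[OF assms(1)] by auto
  then show ?thesis
    using assms by (auto simp: pred_def)
qed

definition misclassified :: "'a set \<Rightarrow> ('a \<Rightarrow> real) \<Rightarrow> ('a \<times> bool) set" where
  "misclassified S f = {x \<in> S. 0 \<le> f x} \<times> {False} \<union> {x \<in> S. f x < 0} \<times> {True}"

lemma label_mult_nonpos_if_misclassified: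
  "(x, y) \<in> misclassified S f \<Longrightarrow> label y * f x \<le> 0"
  by (auto simp: misclassified_def label_def)

locale labelled_prob_space = prob_space P
  for P :: "('a \<times> bool) measure" +
  fixes M :: "'a measure" and \<eta> :: "'a \<Rightarrow> real"
  assumes sets_P: "sets P = sets (M \<Otimes>\<^sub>M count_space UNIV)"
    and \<eta>_measurable: "\<eta> \<in> borel_measurable M"
    and measure_True: "\<And>A. A \<in> sets M \<Longrightarrow>
           measure P (A \<times> {True}) = set_lebesgue_integral (distr P M fst) A \<eta>"
begin

abbreviation marginal :: "'a measure" where
  "marginal \<equiv> distr P M fst"

lemma fst_measurable: "fst \<in> measurable P M"
  using measurable_cong_sets[OF sets_P refl] measurable_fst by blast

sublocale marginal: prob_space marginal
  by (rule prob_space_distr[OF fst_measurable])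

lemma times_in_sets: "A \<in> sets M \<Longrightarrow> A \<times> B \<in> sets P"
  using sets_P by auto

lemma measure_marginal:
  assumes A: "A \<in> sets M"
  shows "measure marginal A = measure P (A \<times> UNIV)"
proof -
  have "space P = space M \<times> UNIV"
    using sets_eq_imp_space_eq[OF sets_P] by (simp add: space_pair_measure)
  then have "fst -` A \<inter> space P = A \<times> UNIV"
    using sets.sets_into_space[OF A] by auto
  then show ?thesis
    using measure_distr[OF fst_measurable A] by simp
qed

lemma measure_True_bounds:
  assumes A: "A \<in> sets M" and bounds: "\<And>x. x \<in> A \<Longrightarrow> a \<le> \<eta> x \<and> \<eta> x \<le> b"
  shows "a * measure marginal A \<le> measure P (A \<times> {True})"
    and "measure P (A \<times> {True}) \<le> b * measure marginal A"
proof -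
  have A': "A \<in> sets marginal" using A by simp
  have \<eta>_integrable: "set_integrable marginal A \<eta>"
    unfolding set_integrable_def
  proof (rule marginal.integrable_const_bound[where B="max \<bar>a\<bar> \<bar>b\<bar>"])
    show "AE x in marginal. norm (indicator A x *\<^sub>R \<eta> x) \<le> max \<bar>a\<bar> \<bar>b\<bar>"
      using bounds by (intro AE_I2) (fastforce simp: indicator_def)
    show "(\<lambda>x. indicator A x *\<^sub>R \<eta> x) \<in> borel_measurable marginal"
      using \<eta>_measurable A by measurable
  qed
  have const_integrable: "set_integrable marginal A (\<lambda>_. d)" for d :: real
    using A' by (simp add: set_integrable_def less_top[symmetric])
  have const_integral: "set_lebesgue_integral marginal A (\<lambda>_. d) = measure marginal A * d" for d :: real
    using set_integral_const[OF A', of d] marginal.emeasure_finite[of A] by simp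
  have "set_lebesgue_integral marginal A (\<lambda>_. a) \<le> set_lebesgue_integral marginal A \<eta>"
    using bounds by (intro set_integral_mono[OF const_integrable \<eta>_integrable]) auto
  then show "a * measure marginal A \<le> measure P (A \<times> {True})"
    using const_integral measure_True[OF A] by (simp add: mult.commute)
  have "set_lebesgue_integral marginal A \<eta> \<le> set_lebesgue_integral marginal A (\<lambda>_. b)"
    using bounds by (intro set_integral_mono[OF \<eta>_integrable const_integrable]) auto
  then show "measure P (A \<times> {True}) \<le> b * measure marginal A"
    using const_integral measure_True[OF A] by (simp add: mult.commute)
qed

lemma measure_False_bounds:
  assumes A: "A \<in> sets M" and bounds: "\<And>x. x \<in> A \<Longrightarrow> a \<le> \<eta> x \<and> \<eta> x \<le> b"
  shows "(1 - b) * measure marginal A \<le> measure P (A \<times> {False})"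
    and "measure P (A \<times> {False}) \<le> (1 - a) * measure marginal A"
proof -
  have "A \<times> UNIV = A \<times> {True} \<union> A \<times> {False}" by auto
  then have "measure marginal A = measure P (A \<times> {True}) + measure P (A \<times> {False})"
    using finite_measure_Union[of "A \<times> {True}" "A \<times> {False}"] A times_in_sets measure_marginal
    by auto
  then show "(1 - b) * measure marginal A \<le> measure P (A \<times> {False})"
    and "measure P (A \<times> {False}) \<le> (1 - a) * measure marginal A"
    using measure_True_bounds[OF A bounds] by (simp_all add: algebra_simps)
qed

lemma sets_misclassified:
  assumes "S \<in> sets M" and "f \<in> borel_measurable M"
  shows "misclassified S f \<in> sets P"
proof -
  have "{x \<in> S. 0 \<le> f x} \<in> sets M"
    using assms(2) by (intro sets_Collect_in_set[OF assms(1)]) measurable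
  moreover have "{x \<in> S. f x < 0} \<in> sets M"
    using assms(2) by (intro sets_Collect_in_set[OF assms(1)]) measurable
  ultimately show ?thesis
    unfolding misclassified_def by (intro sets.Un times_in_sets)
qed

lemma measure_misclassified_lower_bound:
  assumes S: "S \<in> sets M" and bounds: "\<And>x. x \<in> S \<Longrightarrow> \<epsilon> \<le> \<eta> x \<and> \<eta> x \<le> 1 - \<epsilon>"
    and f: "f \<in> borel_measurable M"
  shows "\<epsilon> * measure marginal S \<le> measure P (misclassified S f)"
proof -
  define T where "T = {x \<in> S. 0 \<le> f x}"
  define U where "U = {x \<in> S. f x < 0}"
  have T: "T \<in> sets M"
    unfolding T_def using f by (intro sets_Collect_in_set[OF S]) measurable
  have U: "U \<in> sets M"
    unfolding U_def using f by (intro sets_Collect_in_set[OF S]) measurable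
  have "S = T \<union> U" "T \<inter> U = {}"
    unfolding T_def U_def by auto
  then have "measure marginal S = measure marginal T + measure marginal U"
    using T U marginal.finite_measure_Union[of T U] by simp
  moreover have "measure P (misclassified S f) = measure P (T \<times> {False}) + measure P (U \<times> {True})"
    unfolding misclassified_def T_def[symmetric] U_def[symmetric]
    using T U times_in_sets by (intro finite_measure_Union) auto
  moreover have "\<epsilon> * measure marginal T \<le> measure P (T \<times> {False})"
    using measure_False_bounds(1)[OF T, of \<epsilon> "1 - \<epsilon>"] bounds by (auto simp: T_def)
  moreover have "\<epsilon> * measure marginal U \<le> measure P (U \<times> {True})"
    using measure_True_bounds(1)[OF U, of \<epsilon> "1 - \<epsilon>"] bounds by (auto simp: U_def)
  ultimately show ?thesis
    by (simp add: distrib_left)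
qed

lemma risk_ge_on_region:
  fixes l :: "real \<Rightarrow> real"
  assumes "mono l" and nonneg: "\<forall>z. l z \<ge> 0"
    and S: "S \<in> sets M" and bounds: "\<And>x. x \<in> S \<Longrightarrow> \<epsilon> \<le> \<eta> x \<and> \<eta> x \<le> 1 - \<epsilon>"
    and f: "f \<in> borel_measurable M"
  shows "ereal (-2 * \<rho> + \<epsilon> * measure marginal S * l \<rho>) \<le> risk P l f \<rho>"
proof -
  have "\<epsilon> * measure marginal S * l \<rho> \<le> l \<rho> * measure P (misclassified S f)"
    using mult_left_mono[OF measure_misclassified_lower_bound[OF S bounds f], of "l \<rho>"] nonneg
    by (simp add: mult.commute)
  then have "ereal (-2 * \<rho> + \<epsilon> * measure marginal S * l \<rho>)
      \<le> ereal (-2 * \<rho> + l \<rho> * measure P (misclassified S f))"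
    by simp
  also have "\<dots> \<le> risk P l f \<rho>"
    using sets_misclassified[OF S f] label_mult_nonpos_if_misclassified
    by (rule risk_ge_on_misclassified[OF finite_measure_axioms \<open>mono l\<close> nonneg])
  finally show ?thesis .
qed

end

theorem lemma2:
  fixes M :: "'a measure" and P :: "('a \<times> bool) measure"
    and \<eta> :: "'a \<Rightarrow> real" and l :: "real \<Rightarrow> real" and \<epsilon> :: real
  assumes "prob_space P"
    and "sets P = sets (M \<Otimes>\<^sub>M count_space UNIV)"
    and "\<eta> \<in> borel_measurable M"
    and "\<And>A. A \<in> sets M \<Longrightarrow>
           measure P (A \<times> {True}) = set_lebesgue_integral (distr P M fst) A \<eta>"
    and "\<epsilon> > 0"
    and "measure (distr P M fst) {x \<in> space M. \<epsilon> \<le> \<eta> x \<and> \<eta> x \<le> 1 - \<epsilon>} > 0"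
    and "mono l" and "convex_on UNIV l" and "\<forall>z. l z \<ge> 0"
    and "\<forall>B>0. \<exists>z0. \<forall>z\<ge>z0. \<forall>g\<in>subdiff l z. g \<ge> B"
  shows "(INF fr \<in> borel_measurable M \<times> UNIV. risk P l (fst fr) (snd fr)) > -\<infinity>"
proof -
  interpret labelled_prob_space P M \<eta>
    using assms(1-4) by (simp add: labelled_prob_space_def labelled_prob_space_axioms_def)
  define S where "S = {x \<in> space M. \<epsilon> \<le> \<eta> x \<and> \<eta> x \<le> 1 - \<epsilon>}"
  have S: "S \<in> sets M"
    unfolding S_def using assms(3) by measurable
  have S_bounds: "\<And>x. x \<in> S \<Longrightarrow> \<epsilon> \<le> \<eta> x \<and> \<eta> x \<le> 1 - \<epsilon>"
    unfolding S_def by blast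
  define c where "c = \<epsilon> * measure marginal S"
  have "c > 0"
    using assms(5,6) unfolding c_def S_def by simp
  then obtain K where K: "\<And>\<rho>. 2 / c * \<rho> - K \<le> l \<rho>"
    using ex_affine_minorant[OF assms(8-10), of "2 / c"] by auto
  have "ereal (- c * K) \<le> risk P l f \<rho>" if f: "f \<in> borel_measurable M" for f \<rho>
  proof -
    have "- c * K = -2 * \<rho> + c * (2 / c * \<rho> - K)"
      using \<open>c > 0\<close> by (simp add: field_simps)
    also have "\<dots> \<le> -2 * \<rho> + c * l \<rho>"
      using K[of \<rho>] \<open>c > 0\<close> by simp
    finally have "ereal (- c * K) \<le> ereal (-2 * \<rho> + c * l \<rho>)"
      by simp
    also have "\<dots> \<le> risk P l f \<rho>"
      unfolding c_def by (rule risk_ge_on_region[OF assms(7,9) S S_bounds f])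
    finally show ?thesis .
  qed
  then have "ereal (- c * K) \<le> (INF fr \<in> borel_measurable M \<times> UNIV. risk P l (fst fr) (snd fr))"
    by (intro INF_greatest) auto
  then show ?thesis
    by (rule order.strict_trans2[rotated]) simp
qed

end
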